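(* Let $f:D^n\to\mathbb{R}^d$ have finite global sensitivity $GS_f>0$ and suppose some $y\in D^n$ has $LS_f(y)=GS_f$. For $x\in D^n$ let $gd(x)=\min_{y:\,LS_f(y)=GS_f}d(y,x)$. Let $\beta>0$ satisfy $$\beta\le\min_{x:\,LS_f(x)\neq GS_f}\frac{1}{gd(x)}\ln\Big(\frac{GS_f}{LS_f(x)}\Big)$$ (with the convention $\ln(GS_f/0)=+\infty$). Then for all $x\in D^n$, $S^*_{f,\beta}(x)=GS_f\cdot e^{-\beta\cdot gd(x)}$.
   Context: $D^n$ denotes the set of datasets consisting of $n$ elements; Hamming distance $d(x,y)=|\{i:x_i\neq y_i\}|$. Global sensitivity: $GS_f=\max_{x,y:d(x,y)=1}\|f(x)-f(y)\|_1$. Local sensitivity: $LS_f(x)=\max_{y:d(x,y)=1}\|f(x)-f(y)\|_1$ (so $LS_f(x)\le GS_f$). For $\beta>0$, the $\beta$-smooth sensitivity of $f$ at $x$ is $S^*_{f,\beta}(x)=\max_{y\in D^n}\big(LS_f(y)\,e^{-\beta\, d(y,x)}\big)$. *)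

theory Defs
  imports Complex_Main
begin

text \<open>Datasets in D^n are lists of length n over the type 'a (the data universe D).
  Values f x lie in R^d, represented as functions 'd \<Rightarrow> real with finite index type 'd.\<close>

definition datasets :: "nat \<Rightarrow> 'a list set" where
  "datasets n = {x. length x = n}"

definition hamming :: "'a list \<Rightarrow> 'a list \<Rightarrow> nat" where
  "hamming x y = card {i. i < length x \<and> x ! i \<noteq> y ! i}"

definition l1_dist :: "('d::finite \<Rightarrow> real) \<Rightarrow> ('d \<Rightarrow> real) \<Rightarrow> real" where
  "l1_dist u v = (\<Sum>i\<in>UNIV. \<bar>u i - v i\<bar>)"

definition global_sens :: "('a list \<Rightarrow> 'd::finite \<Rightarrow> real) \<Rightarrow> nat \<Rightarrow> real" where
  "global_sens f n = (SUP p \<in> {(x, y). x \<in> datasets n \<and> y \<in> datasets n \<and> hamming x y = 1}.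
                        l1_dist (f (fst p)) (f (snd p)))"

definition local_sens :: "('a list \<Rightarrow> 'd::finite \<Rightarrow> real) \<Rightarrow> nat \<Rightarrow> 'a list \<Rightarrow> real" where
  "local_sens f n x = (SUP y \<in> {y. y \<in> datasets n \<and> hamming x y = 1}. l1_dist (f x) (f y))"

definition smooth_sens :: "('a list \<Rightarrow> 'd::finite \<Rightarrow> real) \<Rightarrow> nat \<Rightarrow> real \<Rightarrow> 'a list \<Rightarrow> real" where
  "smooth_sens f n \<beta> x = (SUP y \<in> datasets n. local_sens f n y * exp (- \<beta> * real (hamming y x)))"

definition gdist :: "('a list \<Rightarrow> 'd::finite \<Rightarrow> real) \<Rightarrow> nat \<Rightarrow> 'a list \<Rightarrow> nat" where
  "gdist f n x = (LEAST k. \<exists>y \<in> datasets n. local_sens f n y = global_sens f n \<and> hamming y x = k)"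

end

theory Submission
  imports Defs
begin

text \<open>For datasets y with LS(y) = GS the term LS(y) e^{-\<beta> d(y,x)} is maximal for the y nearest
  to x, giving the value GS e^{-\<beta> gd(x)}. For any other y with LS(y) > 0, the bound on \<beta>
  says exactly LS(y) e^{\<beta> gd(y)} \<le> GS, and the triangle inequality gd(x) \<le> gd(y) + d(y,x)
  then shows that its term is also at most GS e^{-\<beta> gd(x)}.\<close>

lemma hamming_triangle:
  assumes "length x = length y" "length y = length z"
  shows "hamming x z \<le> hamming x y + hamming y z"
proof -
  have "{i. i < length x \<and> x ! i \<noteq> z ! i} \<subseteq>
        {i. i < length x \<and> x ! i \<noteq> y ! i} \<union> {i. i < length y \<and> y ! i \<noteq> z ! i}"
    using assms by auto
  hence "card {i. i < length x \<and> x ! i \<noteq> z ! i} \<le>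
        card ({i. i < length x \<and> x ! i \<noteq> y ! i} \<union> {i. i < length y \<and> y ! i \<noteq> z ! i})"
    by (intro card_mono) auto
  also have "\<dots> \<le> card {i. i < length x \<and> x ! i \<noteq> y ! i} + card {i. i < length y \<and> y ! i \<noteq> z ! i}"
    by (rule card_Un_le)
  finally show ?thesis unfolding hamming_def .
qed

lemma hamming_eq_0_imp_eq:
  assumes "length x = length y" "hamming x y = 0"
  shows "x = y"
proof -
  have "{i. i < length x \<and> x ! i \<noteq> y ! i} = {}"
    using assms unfolding hamming_def by simp
  with assms(1) show ?thesis by (metis (mono_tags, lifting) empty_Collect_eq nth_equalityI)
qed

text \<open>Two neighbouring datasets exhibit two distinct data values and n > 0, so
  changing the first entry of any dataset yields a neighbour of it.\<close>

lemma exists_neighbour: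
  fixes p q y :: "'a list"
  assumes "p \<in> datasets n" "q \<in> datasets n" "hamming p q = 1" "y \<in> datasets n"
  shows "\<exists>z \<in> datasets n. hamming y z = 1"
proof -
  have "{i. i < length p \<and> p ! i \<noteq> q ! i} \<noteq> {}"
    using assms(3) unfolding hamming_def by (metis card.empty zero_neq_one)
  then obtain i where i: "i < length p" "p ! i \<noteq> q ! i" by blast
  have len_y: "length y = n" and n_pos: "n > 0"
    using assms i unfolding datasets_def by auto
  define c where "c = (if y ! 0 = p ! i then q ! i else p ! i)"
  have "c \<noteq> y ! 0" using i unfolding c_def by auto
  hence "{j. j < length y \<and> y ! j \<noteq> y[0 := c] ! j} = {0}"
    using n_pos len_y by (auto simp: nth_list_update)
  hence "hamming y (y[0 := c]) = 1" unfolding hamming_def by simp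
  moreover have "y[0 := c] \<in> datasets n" using len_y unfolding datasets_def by simp
  ultimately show ?thesis by blast
qed

lemma l1_dist_nonneg: "0 \<le> l1_dist u v"
  unfolding l1_dist_def by (simp add: sum_nonneg)

text \<open>Both sides are then the junk value Sup {} of the empty supremum.\<close>

lemma local_sens_eq_global_sens_if_no_neighbour:
  fixes f :: "'a list \<Rightarrow> 'd::finite \<Rightarrow> real"
  assumes y: "y \<in> datasets n" and no_nb: "{z. z \<in> datasets n \<and> hamming y z = 1} = {}"
  shows "local_sens f n y = global_sens f n"
proof -
  have "\<not> (p \<in> datasets n \<and> q \<in> datasets n \<and> hamming p q = 1)" for p q :: "'a list"
    using exists_neighbour[of p n q y] y no_nb by auto
  hence no_pairs: "{(x, y). x \<in> datasets n \<and> y \<in> datasets n \<and> hamming x y = 1}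
                    = ({} :: ('a list \<times> 'a list) set)"
    by blast
  show ?thesis
    by (simp only: no_nb no_pairs local_sens_def global_sens_def image_empty)
qed

lemma local_sens_nonneg:
  assumes bdd: "bdd_above {l1_dist (f x) (f y) | x y.
                  x \<in> datasets n \<and> y \<in> datasets n \<and> hamming x y = 1}"
    and y: "y \<in> datasets n"
    and neq: "local_sens f n y \<noteq> global_sens f n"
  shows "0 \<le> local_sens f n y"
proof -
  let ?N = "{z. z \<in> datasets n \<and> hamming y z = 1}"
  obtain z where z: "z \<in> ?N"
    using local_sens_eq_global_sens_if_no_neighbour[OF y] neq by blast
  have "bdd_above ((\<lambda>w. l1_dist (f y) (f w)) ` ?N)"
    by (rule bdd_above_mono[OF bdd]) (use y in auto)
  hence "l1_dist (f y) (f z) \<le> local_sens f n y"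
    unfolding local_sens_def using z by (rule cSUP_upper2) simp
  thus ?thesis using l1_dist_nonneg order_trans by blast
qed

lemma gdist_attained:
  assumes "\<exists>y \<in> datasets n. local_sens f n y = global_sens f n"
  shows "\<exists>y \<in> datasets n. local_sens f n y = global_sens f n \<and> hamming y x = gdist f n x"
  unfolding gdist_def by (rule LeastI_ex) (use assms in blast)

lemma gdist_le_hamming:
  assumes "y \<in> datasets n" "local_sens f n y = global_sens f n"
  shows "gdist f n x \<le> hamming y x"
  unfolding gdist_def by (rule Least_le) (use assms in blast)

lemma gdist_triangle:
  assumes attained: "\<exists>y \<in> datasets n. local_sens f n y = global_sens f n"
    and "x \<in> datasets n" "y \<in> datasets n"
  shows "gdist f n x \<le> gdist f n y + hamming y x"
proof -
  obtain y' where y': "y' \<in> datasets n" "local_sens f n y' = global_sens f n"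
      "hamming y' y = gdist f n y"
    using gdist_attained[OF attained] by blast
  have "gdist f n x \<le> hamming y' x" by (rule gdist_le_hamming[OF y'(1,2)])
  also have "\<dots> \<le> hamming y' y + hamming y x"
    by (rule hamming_triangle) (use assms y'(1) in \<open>auto simp: datasets_def\<close>)
  finally show ?thesis using y'(3) by simp
qed

lemma gdist_pos:
  assumes attained: "\<exists>y \<in> datasets n. local_sens f n y = global_sens f n"
    and x: "x \<in> datasets n" and neq: "local_sens f n x \<noteq> global_sens f n"
  shows "0 < gdist f n x"
proof (rule ccontr)
  assume "\<not> 0 < gdist f n x"
  moreover obtain y where "y \<in> datasets n" "local_sens f n y = global_sens f n"
      "hamming y x = gdist f n x"
    using gdist_attained[OF attained] by blast
  ultimately have "hamming y x = 0" by simp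
  with x \<open>y \<in> datasets n\<close> have "y = x" using hamming_eq_0_imp_eq by (fastforce simp: datasets_def)
  with neq \<open>local_sens f n y = global_sens f n\<close> show False by simp
qed

lemma mult_exp_le_if_le_ln_divide:
  fixes a b k :: real
  assumes "0 < a" "0 < b" "0 < k" "\<beta> \<le> 1 / k * ln (b / a)"
  shows "a * exp (\<beta> * k) \<le> b"
proof -
  have "\<beta> * k \<le> ln (b / a)" using assms(3,4) by (simp add: field_simps)
  hence "exp (\<beta> * k) \<le> b / a" using assms(1,2) by (metis divide_pos_pos exp_le_cancel_iff exp_ln)
  thus ?thesis using assms(1) by (simp add: field_simps)
qed

lemma smooth_sens_term_le:
  fixes f :: "'a list \<Rightarrow> 'd::finite \<Rightarrow> real" and x y :: "'a list"
  assumes bdd: "bdd_above {l1_dist (f x) (f y) | x y.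
                  x \<in> datasets n \<and> y \<in> datasets n \<and> hamming x y = 1}"
    and GS_pos: "global_sens f n > 0"
    and attained: "\<exists>y \<in> datasets n. local_sens f n y = global_sens f n"
    and beta_pos: "\<beta> > 0"
    and beta_le: "local_sens f n y \<noteq> global_sens f n \<longrightarrow> local_sens f n y = 0 \<or>
                    \<beta> \<le> (1 / real (gdist f n y)) * ln (global_sens f n / local_sens f n y)"
    and x: "x \<in> datasets n" and y: "y \<in> datasets n"
  shows "local_sens f n y * exp (- \<beta> * real (hamming y x))
           \<le> global_sens f n * exp (- \<beta> * real (gdist f n x))"
proof (cases "local_sens f n y = global_sens f n")
  case True
  have "gdist f n x \<le> hamming y x" by (rule gdist_le_hamming[OF y True])
  with True GS_pos beta_pos show ?thesis by simp
next
  case neq: False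
  have LS_nonneg: "0 \<le> local_sens f n y" by (rule local_sens_nonneg[OF bdd y neq])
  show ?thesis
  proof (cases "local_sens f n y = 0")
    case True
    with GS_pos show ?thesis by simp
  next
    case False
    let ?LS = "local_sens f n y" and ?GS = "global_sens f n"
    have LS_exp: "?LS * exp (\<beta> * real (gdist f n y)) \<le> ?GS"
      using False neq beta_le LS_nonneg GS_pos gdist_pos[OF attained y neq]
      by (intro mult_exp_le_if_le_ln_divide) auto
    have "real (gdist f n x) \<le> real (gdist f n y) + real (hamming y x)"
      using gdist_triangle[OF attained x y] by linarith
    hence "\<beta> * real (gdist f n x) \<le> \<beta> * (real (gdist f n y) + real (hamming y x))"
      using beta_pos by (intro mult_left_mono) auto
    hence decay: "exp (- \<beta> * real (hamming y x))
                    \<le> exp (\<beta> * real (gdist f n y)) * exp (- \<beta> * real (gdist f n x))"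
      by (simp add: algebra_simps flip: exp_add)
    have "?LS * exp (- \<beta> * real (hamming y x))
            \<le> ?LS * (exp (\<beta> * real (gdist f n y)) * exp (- \<beta> * real (gdist f n x)))"
      using decay LS_nonneg by (rule mult_left_mono)
    also have "\<dots> = (?LS * exp (\<beta> * real (gdist f n y))) * exp (- \<beta> * real (gdist f n x))"
      by (simp only: mult.assoc)
    also have "\<dots> \<le> ?GS * exp (- \<beta> * real (gdist f n x))"
      using LS_exp by (rule mult_right_mono) simp
    finally show ?thesis .
  qed
qed

theorem theorem4:
  fixes f :: "'a list \<Rightarrow> 'd::finite \<Rightarrow> real" and n :: nat and \<beta> :: real
  assumes GS_finite: "bdd_above {l1_dist (f x) (f y) | x y.
                         x \<in> datasets n \<and> y \<in> datasets n \<and> hamming x y = 1}"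
    and GS_pos: "global_sens f n > 0"
    and attained: "\<exists>y \<in> datasets n. local_sens f n y = global_sens f n"
    and beta_pos: "\<beta> > 0"
    and beta_le: "\<forall>x \<in> datasets n. local_sens f n x \<noteq> global_sens f n \<longrightarrow>
                    local_sens f n x = 0 \<or>
                    \<beta> \<le> (1 / real (gdist f n x)) * ln (global_sens f n / local_sens f n x)"
  shows "\<forall>x \<in> datasets n. smooth_sens f n \<beta> x = global_sens f n * exp (- \<beta> * real (gdist f n x))"
proof
  fix x :: "'a list" assume x: "x \<in> datasets n"
  define F where "F y = local_sens f n y * exp (- \<beta> * real (hamming y x))" for y
  obtain y0 where y0: "y0 \<in> datasets n" "local_sens f n y0 = global_sens f n"
      "hamming y0 x = gdist f n x"
    using gdist_attained[OF attained] by blast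
  have "F y \<le> F y0" if "y \<in> datasets n" for y
    using smooth_sens_term_le[OF GS_finite GS_pos attained beta_pos _ x that] beta_le that y0
    unfolding F_def by simp
  hence "Sup (F ` datasets n) = F y0"
    using y0(1) by (intro cSup_eq_maximum) auto
  with y0 show "smooth_sens f n \<beta> x = global_sens f n * exp (- \<beta> * real (gdist f n x))"
    unfolding smooth_sens_def F_def by simp
qed

end
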